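(* Let $\mathcal{F}\subseteq\mathcal{P}(\omega)$ be a free filter that is non-meager. Then there is a countable dense set $D\subseteq C_p(\xi(\mathcal{F}))$ such that for every crowded $P\subseteq D$ there is a crowded subset $Q\subseteq P$ whose closure in $C_p(\xi(\mathcal{F}))$ is compact.
   Context: A filter on $\omega$ is free if it contains all cofinite sets; it is non-meager if it is not a meager subset of the Cantor set $2^\omega$ (subsets of $\omega$ identified with characteristic functions). $\xi(\mathcal{F})$ is the space $\omega\cup\{\infty\}$ in which every point of $\omega$ is isolated and the neighborhoods of $\infty$ are the sets $\{\infty\}\cup A$ with $A\in\mathcal{F}$. $C_p(X)$ is the space of continuous functions $X\to\mathbb{R}$ with the pointwise convergence topology. A space is crowded if it is non-empty and has no isolated points. *)

theory Defs
  imports "HOL-Analysis.Analysis"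
begin

definition is_filter_on_nat :: "nat set set \<Rightarrow> bool" where
  "is_filter_on_nat F \<longleftrightarrow> UNIV \<in> F \<and> {} \<notin> F \<and>
     (\<forall>A B. A \<in> F \<longrightarrow> B \<in> F \<longrightarrow> A \<inter> B \<in> F) \<and>
     (\<forall>A B. A \<in> F \<longrightarrow> A \<subseteq> B \<longrightarrow> B \<in> F)"

definition free_filter :: "nat set set \<Rightarrow> bool" where
  "free_filter F \<longleftrightarrow> is_filter_on_nat F \<and> (\<forall>A. finite (UNIV - A) \<longrightarrow> A \<in> F)"

definition cantor_topology :: "(nat \<Rightarrow> bool) topology" where
  "cantor_topology = product_topology (\<lambda>_. discrete_topology (UNIV :: bool set)) UNIV"

definition nowhere_dense_in :: "'a topology \<Rightarrow> 'a set \<Rightarrow> bool" where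
  "nowhere_dense_in X S \<longleftrightarrow> S \<subseteq> topspace X \<and> X interior_of (X closure_of S) = {}"

definition meager_in :: "'a topology \<Rightarrow> 'a set \<Rightarrow> bool" where
  "meager_in X S \<longleftrightarrow> (\<exists>\<N>. countable \<N> \<and> (\<forall>N\<in>\<N>. nowhere_dense_in X N) \<and> S \<subseteq> \<Union>\<N>)"

definition non_meager_family :: "nat set set \<Rightarrow> bool" where
  "non_meager_family F \<longleftrightarrow> \<not> meager_in cantor_topology ((\<lambda>A n. n \<in> A) ` F)"

text \<open>The space xi(F) on nat option, None playing the role of the point infinity.\<close>
definition xi_topology :: "nat set set \<Rightarrow> nat option topology" where
  "xi_topology F = topology (\<lambda>U. None \<in> U \<longrightarrow> (\<exists>A\<in>F. Some ` A \<subseteq> U))"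

definition Cp :: "'a topology \<Rightarrow> ('a \<Rightarrow> real) topology" where
  "Cp X = subtopology (product_topology (\<lambda>_. euclideanreal) UNIV)
                      {f. continuous_map X euclideanreal f}"

definition crowded_in :: "'a topology \<Rightarrow> 'a set \<Rightarrow> bool" where
  "crowded_in X P \<longleftrightarrow> P \<noteq> {} \<and> P \<subseteq> topspace X \<and> P \<subseteq> X derived_set_of P"

end

(* The dense set consists of the eventually constant functions with rational values. Given a
   crowded P inside it, pick for every p \<in> P and m a point a p m \<in> P - {p} that is
   tol m / 4-close to p at \<infinity> and at 0, ..., m - 1, and grow from some p0 \<in> P the tree of
   iterated choices, where at stage k the step is taken with m = n_k (threshold k), a bound for
   the indices beyond which the nodes of stage k are constant. Since F is non-meager, some A \<in> F
   misses infinitely many of the intervals [n_k, n_(k+1)); the subtree branching only at those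
   stages is still crowded. For n \<in> A, such a branching either has n \<ge> n_(k+1), where the new
   node is constant, or n < n_k, where it moves the values at n and \<infinity> by less than tol n_k / 4;
   summing up, every node q of the subtree satisfies |q n - q \<infinity>| \<le> tol n for n \<in> A above n_0.
   The nodes are also pointwise bounded, and the functions with these two properties form a
   compact set in C_p(\<xi>(F)): it is closed and bounded in the product topology, and A \<in> F makes
   its members continuous at \<infinity>. *)

theory Submission
  imports Defs
begin

lemma Cp_eq_top_of_set: "Cp X = top_of_set {f. continuous_map X euclideanreal f}"
  unfolding Cp_def euclidean_product_topology ..

lemma topspace_Cp: "topspace (Cp X) = {f. continuous_map X euclideanreal f}"
  by (simp add: Cp_eq_top_of_set)

lemma Hausdorff_space_Cp: "Hausdorff_space (Cp X)"
  unfolding Cp_def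
  by (intro Hausdorff_space_subtopology) (simp add: Hausdorff_space_product_topology)

lemma open_pointwise_ball:
  fixes f :: "'a \<Rightarrow> real"
  assumes "finite S"
  shows "open {g. \<forall>x\<in>S. \<bar>g x - f x\<bar> < e}"
proof -
  have "open {g. \<forall>x\<in>S. g (id x) \<in> ball (f x) e}"
    using assms by (intro product_topology_basis') auto
  moreover have "{g. \<forall>x\<in>S. g (id x) \<in> ball (f x) e} = {g. \<forall>x\<in>S. \<bar>g x - f x\<bar> < e}"
    by (auto simp: dist_real_def abs_minus_commute)
  ultimately show ?thesis by simp
qed

lemma open_fun_contains_pointwise_ball:
  fixes f :: "'a \<Rightarrow> real"
  assumes "open V" "f \<in> V"
  shows "\<exists>S e. finite S \<and> e > 0 \<and> {g. \<forall>x\<in>S. \<bar>g x - f x\<bar> < e} \<subseteq> V"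
proof -
  obtain U where fin: "finite {x. U x \<noteq> UNIV}" and U: "\<And>x. open (U x)"
    and fU: "f \<in> Pi\<^sub>E UNIV U" and UV: "Pi\<^sub>E UNIV U \<subseteq> V"
    using assms unfolding open_fun_def openin_product_topology_alt by force
  define S where "S = {x. U x \<noteq> UNIV}"
  have "\<forall>x. \<exists>e>0. ball (f x) e \<subseteq> U x"
    using U fU open_contains_ball by (metis PiE_E UNIV_I)
  then obtain d where d: "\<And>x. d x > 0" "\<And>x. ball (f x) (d x) \<subseteq> U x"
    by metis
  define e where "e = Min (insert 1 (d ` S))"
  have "finite S" using fin by (simp add: S_def)
  then have "e > 0" and e_le: "\<And>x. x \<in> S \<Longrightarrow> e \<le> d x"
    using d(1) by (auto simp: e_def)
  have "g \<in> V" if g: "\<forall>x\<in>S. \<bar>g x - f x\<bar> < e" for g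
  proof -
    have "g x \<in> U x" for x
    proof (cases "x \<in> S")
      case True
      then have "g x \<in> ball (f x) (d x)"
        using g e_le by (force simp: dist_real_def abs_minus_commute)
      then show ?thesis using d(2) by blast
    qed (simp add: S_def)
    then show ?thesis using UV by auto
  qed
  then show ?thesis using \<open>finite S\<close> \<open>e > 0\<close> by (intro exI[of _ S] exI[of _ e]) auto
qed

lemma Cp_neighbourhoods_meet_iff:
  fixes f :: "'a \<Rightarrow> real"
  assumes f: "f \<in> topspace (Cp X)"
  shows "(\<forall>T. f \<in> T \<and> openin (Cp X) T \<longrightarrow> (\<exists>g. R g \<and> g \<in> T)) \<longleftrightarrow>
         (\<forall>S e. finite S \<longrightarrow> e > 0 \<longrightarrow>
            (\<exists>g. R g \<and> g \<in> topspace (Cp X) \<and> (\<forall>x\<in>S. \<bar>g x - f x\<bar> < e)))"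
proof (intro iffI allI impI)
  fix S :: "'a set" and e :: real
  assume meets: "\<forall>T. f \<in> T \<and> openin (Cp X) T \<longrightarrow> (\<exists>g. R g \<and> g \<in> T)"
    and "finite S" "e > 0"
  let ?T = "topspace (Cp X) \<inter> {g. \<forall>x\<in>S. \<bar>g x - f x\<bar> < e}"
  have "openin (Cp X) ?T"
    using open_pointwise_ball[OF \<open>finite S\<close>] by (auto simp: Cp_eq_top_of_set openin_open)
  moreover have "f \<in> ?T" using f \<open>e > 0\<close> by simp
  ultimately obtain g where "R g" "g \<in> ?T"
    using meets[rule_format, of ?T] by blast
  then show "\<exists>g. R g \<and> g \<in> topspace (Cp X) \<and> (\<forall>x\<in>S. \<bar>g x - f x\<bar> < e)" by blast
next
  fix T
  assume near: "\<forall>S e. finite S \<longrightarrow> e > 0 \<longrightarrow>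
      (\<exists>g. R g \<and> g \<in> topspace (Cp X) \<and> (\<forall>x\<in>S. \<bar>g x - f x\<bar> < e))"
    and "f \<in> T \<and> openin (Cp X) T"
  then obtain V where "open V" "T = topspace (Cp X) \<inter> V" "f \<in> V"
    by (auto simp: Cp_eq_top_of_set openin_open)
  then obtain S e where "finite S" "e > 0" and SV: "{g. \<forall>x\<in>S. \<bar>g x - f x\<bar> < e} \<subseteq> V"
    using open_fun_contains_pointwise_ball[OF \<open>open V\<close> \<open>f \<in> V\<close>] by blast
  obtain g where "R g" "g \<in> topspace (Cp X)" "\<forall>x\<in>S. \<bar>g x - f x\<bar> < e"
    using near \<open>finite S\<close> \<open>e > 0\<close> by blast
  then show "\<exists>g. R g \<and> g \<in> T" using SV \<open>T = _\<close> by blast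
qed

lemma in_closure_of_Cp:
  fixes f :: "'a \<Rightarrow> real"
  assumes "D \<subseteq> topspace (Cp X)"
  shows "f \<in> Cp X closure_of D \<longleftrightarrow> f \<in> topspace (Cp X) \<and>
           (\<forall>S e. finite S \<longrightarrow> e > 0 \<longrightarrow> (\<exists>g\<in>D. \<forall>x\<in>S. \<bar>g x - f x\<bar> < e))"
proof (cases "f \<in> topspace (Cp X)")
  case True
  have "(\<exists>g. g \<in> D \<and> g \<in> topspace (Cp X) \<and> Q g) \<longleftrightarrow> (\<exists>g\<in>D. Q g)" for Q
    using assms by blast
  then show ?thesis
    using Cp_neighbourhoods_meet_iff[OF True, of "\<lambda>g. g \<in> D"] True
    unfolding in_closure_of by simp
qed (simp add: in_closure_of)

lemma in_derived_set_of_Cp: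
  fixes f :: "'a \<Rightarrow> real"
  assumes "P \<subseteq> topspace (Cp X)"
  shows "f \<in> Cp X derived_set_of P \<longleftrightarrow> f \<in> topspace (Cp X) \<and>
           (\<forall>S e. finite S \<longrightarrow> e > 0 \<longrightarrow> (\<exists>g\<in>P. g \<noteq> f \<and> (\<forall>x\<in>S. \<bar>g x - f x\<bar> < e)))"
proof (cases "f \<in> topspace (Cp X)")
  case True
  have "(\<exists>g. (g \<noteq> f \<and> g \<in> P) \<and> g \<in> topspace (Cp X) \<and> Q g) \<longleftrightarrow> (\<exists>g\<in>P. g \<noteq> f \<and> Q g)" for Q
    using assms by blast
  then show ?thesis
    using Cp_neighbourhoods_meet_iff[OF True, of "\<lambda>g. g \<noteq> f \<and> g \<in> P"] True
    unfolding in_derived_set_of by simp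
qed (simp add: in_derived_set_of)

lemma istopology_xi:
  assumes "is_filter_on_nat F"
  shows "istopology (\<lambda>U. None \<in> U \<longrightarrow> (\<exists>A\<in>F. Some ` A \<subseteq> U))"
  unfolding istopology_def
proof (intro conjI allI impI)
  fix S T :: "nat option set"
  assume "None \<in> S \<longrightarrow> (\<exists>A\<in>F. Some ` A \<subseteq> S)" "None \<in> T \<longrightarrow> (\<exists>A\<in>F. Some ` A \<subseteq> T)"
    and "None \<in> S \<inter> T"
  then obtain A B where "A \<in> F" "B \<in> F" "Some ` A \<subseteq> S" "Some ` B \<subseteq> T" by auto
  moreover have "A \<inter> B \<in> F"
    using assms \<open>A \<in> F\<close> \<open>B \<in> F\<close> unfolding is_filter_on_nat_def by blast
  ultimately show "\<exists>A\<in>F. Some ` A \<subseteq> S \<inter> T" by (intro bexI[of _ "A \<inter> B"]) auto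
next
  fix K :: "nat option set set"
  assume "\<forall>S\<in>K. None \<in> S \<longrightarrow> (\<exists>A\<in>F. Some ` A \<subseteq> S)" "None \<in> \<Union>K"
  then obtain S A where "S \<in> K" "A \<in> F" "Some ` A \<subseteq> S" by auto
  then show "\<exists>A\<in>F. Some ` A \<subseteq> \<Union>K" by blast
qed

lemma openin_xi_topology:
  assumes "is_filter_on_nat F"
  shows "openin (xi_topology F) U \<longleftrightarrow> (None \<in> U \<longrightarrow> (\<exists>A\<in>F. Some ` A \<subseteq> U))"
  unfolding xi_topology_def using istopology_xi[OF assms] by simp

lemma topspace_xi_topology:
  assumes "is_filter_on_nat F"
  shows "topspace (xi_topology F) = UNIV"
  using assms openin_subset[of "xi_topology F" UNIV]
  by (auto simp: openin_xi_topology is_filter_on_nat_def)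

lemma continuous_map_xi_topologyI:
  assumes F: "is_filter_on_nat F"
    and g: "\<And>e. e > 0 \<Longrightarrow> \<exists>A\<in>F. \<forall>n\<in>A. \<bar>g (Some n) - g None\<bar> < e"
  shows "continuous_map (xi_topology F) euclideanreal g"
  unfolding continuous_map_def topspace_xi_topology[OF F] openin_xi_topology[OF F]
proof (intro conjI allI impI; clarsimp)
  fix U :: "real set" assume "open U" "g None \<in> U"
  then obtain e where "e > 0" "ball (g None) e \<subseteq> U" using open_contains_ball by blast
  moreover obtain A where "A \<in> F" "\<forall>n\<in>A. \<bar>g (Some n) - g None\<bar> < e" using g[OF \<open>e > 0\<close>] by blast
  ultimately show "\<exists>A\<in>F. Some ` A \<subseteq> {x. g x \<in> U}"
    by (force simp: dist_real_def abs_minus_commute)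
qed

lemma free_filter_atLeast:
  assumes "free_filter F"
  shows "{N..} \<in> F"
proof -
  have "UNIV - {N..} = {..<N}" by auto
  then show ?thesis using assms unfolding free_filter_def by simp
qed

lemma free_filter_Int_atLeast:
  assumes "free_filter F" "A \<in> F"
  shows "A \<inter> {N..} \<in> F"
  using assms free_filter_atLeast[OF assms(1)]
  unfolding free_filter_def is_filter_on_nat_def by blast

lemma continuous_map_xi_topology_eventually_const:
  assumes "free_filter F" "\<And>n. N \<le> n \<Longrightarrow> g (Some n) = g None"
  shows "continuous_map (xi_topology F) euclideanreal g"
proof (rule continuous_map_xi_topologyI)
  show "is_filter_on_nat F" using assms(1) by (simp add: free_filter_def)
  show "\<exists>A\<in>F. \<forall>n\<in>A. \<bar>g (Some n) - g None\<bar> < e" if "e > 0" for e :: real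
    using that assms free_filter_atLeast[OF assms(1), of N] by (intro bexI[of _ "{N..}"]) auto
qed

lemma compactin_Cp_xi_topology:
  fixes c :: "nat \<Rightarrow> real" and r :: "nat option \<Rightarrow> real"
  assumes F: "free_filter F" and "A \<in> F" and c: "c \<longlonglongrightarrow> 0"
  shows "compactin (Cp (xi_topology F))
           {g. (\<forall>n\<in>A. \<bar>g (Some n) - g None\<bar> \<le> c n) \<and> (\<forall>x. \<bar>g x\<bar> \<le> r x)}"
    (is "compactin _ ?K")
proof -
  have "closed {g :: nat option \<Rightarrow> real. \<forall>n\<in>A. \<bar>g (Some n) - g None\<bar> \<le> c n}"
    unfolding Ball_def
    by (intro closed_Collect_all closed_Collect_imp open_Collect_const closed_Collect_le
        continuous_intros continuous_on_product_coordinates)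
  moreover have "compact (Pi\<^sub>E UNIV (\<lambda>x. {- r x..r x}))"
    using compactin_PiE[of "\<lambda>_. euclideanreal" UNIV "\<lambda>x. {- r x..r x}"]
    by (simp add: euclidean_product_topology)
  moreover have "?K = {g. \<forall>n\<in>A. \<bar>g (Some n) - g None\<bar> \<le> c n} \<inter> Pi\<^sub>E UNIV (\<lambda>x. {- r x..r x})"
    by (auto simp: PiE_iff abs_le_iff minus_le_iff)
  ultimately have "compact ?K" by auto
  moreover have "continuous_map (xi_topology F) euclideanreal g" if "g \<in> ?K" for g
  proof (rule continuous_map_xi_topologyI)
    show "is_filter_on_nat F" using F by (simp add: free_filter_def)
    fix e :: real assume "e > 0"
    then obtain N where N: "\<And>n. N \<le> n \<Longrightarrow> c n < e"
      using order_tendstoD(2)[OF c \<open>e > 0\<close>] by (auto simp: eventually_sequentially)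
    have "\<bar>g (Some n) - g None\<bar> < e" if "n \<in> A \<inter> {N..}" for n
      using \<open>g \<in> ?K\<close> N[of n] that by force
    then show "\<exists>A\<in>F. \<forall>n\<in>A. \<bar>g (Some n) - g None\<bar> < e"
      using free_filter_Int_atLeast[OF F \<open>A \<in> F\<close>] by blast
  qed
  ultimately show ?thesis
    by (auto simp: Cp_eq_top_of_set compactin_subtopology)
qed

lemma topspace_cantor_topology [simp]: "topspace cantor_topology = UNIV"
  by (simp add: cantor_topology_def)

lemma openin_cantor_topology_cylinder:
  assumes "openin cantor_topology U" "x \<in> U"
  shows "\<exists>N. \<forall>y. (\<forall>i<N. y i = x i) \<longrightarrow> y \<in> U"
proof -
  obtain W where fin: "finite {i. W i \<noteq> UNIV}"
    and xW: "x \<in> Pi\<^sub>E UNIV W" and WU: "Pi\<^sub>E UNIV W \<subseteq> U"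
    using assms unfolding openin_product_topology_alt cantor_topology_def by force
  obtain N where N: "\<And>i. W i \<noteq> UNIV \<Longrightarrow> i < N"
    using finite_nat_bounded[OF fin] by blast
  have "y \<in> U" if "\<forall>i<N. y i = x i" for y
  proof -
    have "y i \<in> W i" for i
      using N[of i] that xW by (cases "W i = UNIV") auto
    then show ?thesis using WU by auto
  qed
  then show ?thesis by blast
qed

lemma openin_cantor_topology_vanishing:
  assumes "finite S"
  shows "openin cantor_topology {ch. \<forall>n\<in>S. \<not> ch n}"
proof -
  have "{ch. \<forall>n\<in>S. \<not> ch n} = Pi\<^sub>E UNIV (\<lambda>n. if n \<in> S then {False} else UNIV)"
    by (auto simp: PiE_iff split: if_splits)
  then show ?thesis
    using assms by (simp add: cantor_topology_def openin_PiE_gen rev_finite_subset[of S])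
qed

lemma nowhere_dense_hitting_all_intervals:
  assumes s: "strict_mono s"
  shows "nowhere_dense_in cantor_topology {ch. \<forall>k\<ge>m. \<exists>n\<in>{s k..<s (Suc k)}. ch n}"
    (is "nowhere_dense_in _ ?M")
proof -
  have "x \<notin> cantor_topology interior_of (cantor_topology closure_of ?M)" for x
  proof
    assume "x \<in> cantor_topology interior_of (cantor_topology closure_of ?M)"
    then obtain N where N: "\<forall>y. (\<forall>i<N. y i = x i) \<longrightarrow>
        y \<in> cantor_topology interior_of (cantor_topology closure_of ?M)"
      using openin_cantor_topology_cylinder[OF openin_interior_of] by blast
    define k where "k = max m N"
    define T where "T = {ch. \<forall>n\<in>{s k..<s (Suc k)}. \<not> ch n}"
    define y where "y i = (i < N \<and> x i)" for i
    have "y \<in> cantor_topology interior_of (cantor_topology closure_of ?M)"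
      using N by (simp add: y_def)
    then have y_cl: "y \<in> cantor_topology closure_of ?M"
      by (rule subsetD[OF interior_of_subset])
    have "openin cantor_topology T"
      unfolding T_def by (simp add: openin_cantor_topology_vanishing)
    moreover have "y \<in> T"
      using seq_suble[OF s, of k] by (auto simp: T_def y_def k_def)
    ultimately obtain ch where "ch \<in> ?M" "ch \<in> T"
      using y_cl[unfolded in_closure_of] by blast
    moreover have "m \<le> k" by (simp add: k_def)
    ultimately obtain n where "n \<in> {s k..<s (Suc k)}" "ch n" "ch \<in> T"
      by auto
    then show False
      by (simp add: T_def)
  qed
  then show ?thesis by (auto simp: nowhere_dense_in_def)
qed

lemma non_meager_family_avoids_intervals:
  assumes nm: "non_meager_family F" and s: "strict_mono s"
  shows "\<exists>A\<in>F. \<exists>\<^sub>\<infinity>k. {s k..<s (Suc k)} \<inter> A = {}"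
proof (rule ccontr)
  let ?M = "\<lambda>m. {ch. \<forall>k\<ge>m. \<exists>n\<in>{s k..<s (Suc k)}. ch n}"
  assume "\<not> ?thesis"
  then have "\<forall>A\<in>F. \<exists>m. \<forall>k\<ge>m. {s k..<s (Suc k)} \<inter> A \<noteq> {}"
    by (simp add: INFM_nat_le)
  then have "(\<lambda>A n. n \<in> A) ` F \<subseteq> (\<Union>m. ?M m)"
    by fastforce
  then have "meager_in cantor_topology ((\<lambda>A n. n \<in> A) ` F)"
    unfolding meager_in_def using nowhere_dense_hitting_all_intervals[OF s]
    by (intro exI[of _ "range ?M"]) auto
  then show False using nm by (simp add: non_meager_family_def)
qed

definition first_coords :: "nat \<Rightarrow> nat option set" where
  "first_coords N = insert None (Some ` {..<N})"

lemma finite_first_coords [simp]: "finite (first_coords N)"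
  by (simp add: first_coords_def)

lemma first_coords_mono: "M \<le> N \<Longrightarrow> first_coords M \<subseteq> first_coords N"
  by (auto simp: first_coords_def)

lemma finite_subset_first_coords:
  assumes "finite S"
  shows "\<exists>N. S \<subseteq> first_coords N"
proof -
  have "finite (Some -` S)" using assms by (simp add: finite_vimageI)
  then obtain N where "Some -` S \<subseteq> {..<N}"
    using finite_nat_bounded by blast
  moreover have "S \<subseteq> insert None (Some ` (Some -` S))"
    by (auto intro: option.exhaust)
  ultimately show ?thesis
    unfolding first_coords_def by blast
qed

definition rat_fun_of :: "rat list \<Rightarrow> rat \<Rightarrow> nat option \<Rightarrow> real" where
  "rat_fun_of xs c x =
     (case x of Some n \<Rightarrow> if n < length xs then of_rat (xs ! n) else of_rat c | None \<Rightarrow> of_rat c)"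

lemma rat_fun_of_eventually_const: "length xs \<le> n \<Longrightarrow> rat_fun_of xs c (Some n) = rat_fun_of xs c None"
  by (simp add: rat_fun_of_def)

lemma rat_funs_subset_Cp_xi_topology:
  assumes "free_filter F"
  shows "range (case_prod rat_fun_of) \<subseteq> topspace (Cp (xi_topology F))"
proof clarify
  fix xs c
  show "rat_fun_of xs c \<in> topspace (Cp (xi_topology F))"
    using continuous_map_xi_topology_eventually_const[OF assms, of "length xs"]
    by (simp add: topspace_Cp rat_fun_of_eventually_const)
qed

lemma closure_of_rat_funs:
  assumes F: "free_filter F"
  shows "Cp (xi_topology F) closure_of range (case_prod rat_fun_of) = topspace (Cp (xi_topology F))"
proof -
  have near: "\<exists>g\<in>range (case_prod rat_fun_of). \<forall>x\<in>S. \<bar>g x - f x\<bar> < e"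
    if "finite S" "e > 0" for f :: "nat option \<Rightarrow> real" and S e
  proof -
    obtain N where N: "S \<subseteq> first_coords N"
      using finite_subset_first_coords[OF \<open>finite S\<close>] by blast
    have "\<exists>q::rat. \<bar>of_rat q - f x\<bar> < e" for x
      using of_rat_dense[of "f x - e" "f x + e"] \<open>e > 0\<close> by (auto simp: abs_diff_less_iff)
    then obtain \<rho> :: "nat option \<Rightarrow> rat" where \<rho>: "\<And>x. \<bar>of_rat (\<rho> x) - f x\<bar> < e"
      by metis
    define g where "g = rat_fun_of (map (\<rho> \<circ> Some) [0..<N]) (\<rho> None)"
    have "g x = of_rat (\<rho> x)" if "x \<in> first_coords N" for x
      using that by (auto simp: g_def rat_fun_of_def first_coords_def)
    then show ?thesis
      using N \<rho> by (intro bexI[of _ g]) (auto simp: g_def)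
  qed
  show ?thesis
  proof (rule subset_antisym[OF closure_of_subset_topspace subsetI])
    fix f assume "f \<in> topspace (Cp (xi_topology F))"
    then show "f \<in> Cp (xi_topology F) closure_of range (case_prod rat_fun_of)"
      unfolding in_closure_of_Cp[OF rat_funs_subset_Cp_xi_topology[OF F]]
      by (intro conjI allI impI near)
  qed
qed

definition tol :: "nat \<Rightarrow> real" where
  "tol m = (1 / 2) ^ m"

lemma tol_pos: "tol m > 0"
  by (simp add: tol_def)

lemma tol_le_one: "tol m \<le> 1"
  by (simp add: tol_def power_le_one)

lemma tol_antimono: "m \<le> m' \<Longrightarrow> tol m' \<le> tol m"
  by (simp add: tol_def power_decreasing)

lemma tol_less_imp_le_half: "n < m \<Longrightarrow> tol m \<le> tol n / 2"
  using tol_antimono[of "Suc n" m] by (simp add: tol_def)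

lemma LIMSEQ_tol: "tol \<longlonglongrightarrow> 0"
  unfolding tol_def by (rule LIMSEQ_realpow_zero) simp_all

locale crowded_tree =
  fixes P :: "(nat option \<Rightarrow> real) set"
    and p0 :: "nat option \<Rightarrow> real"
    and a :: "(nat option \<Rightarrow> real) \<Rightarrow> nat \<Rightarrow> nat option \<Rightarrow> real"
    and b :: "(nat option \<Rightarrow> real) \<Rightarrow> nat"
  assumes p0_in: "p0 \<in> P"
    and a_in: "p \<in> P \<Longrightarrow> a p m \<in> P"
    and a_neq: "p \<in> P \<Longrightarrow> a p m \<noteq> p"
    and a_close: "p \<in> P \<Longrightarrow> x \<in> first_coords m \<Longrightarrow> \<bar>a p m x - p x\<bar> < tol m / 4"
    and b_const: "q \<in> P \<Longrightarrow> b q \<le> n \<Longrightarrow> q (Some n) = q None"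
begin

primrec nodes :: "nat \<Rightarrow> (nat option \<Rightarrow> real) set" where
  "nodes 0 = {p0}"
| "nodes (Suc k) = nodes k \<union> (\<lambda>p. a p (k + Max (b ` nodes k))) ` nodes k"

definition threshold :: "nat \<Rightarrow> nat" where
  "threshold k = k + Max (b ` nodes k)"

lemma nodes_Suc_threshold [simp]: "nodes (Suc k) = nodes k \<union> (\<lambda>p. a p (threshold k)) ` nodes k"
  by (simp add: threshold_def)

declare nodes.simps(2) [simp del]

lemma finite_nodes: "finite (nodes k)"
  by (induction k) simp_all

lemma nodes_mono: "j \<le> k \<Longrightarrow> nodes j \<subseteq> nodes k"
  by (rule lift_Suc_mono_le[of nodes]) auto

lemma p0_in_nodes: "p0 \<in> nodes k"
  using nodes_mono[of 0 k] by simp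

lemma nodes_subset: "nodes k \<subseteq> P"
  by (induction k) (auto simp: p0_in a_in)

lemma b_le_threshold: "p \<in> nodes k \<Longrightarrow> b p \<le> threshold k"
  using finite_nodes[of k] by (simp add: threshold_def trans_le_add2)

lemma threshold_ge: "k \<le> threshold k"
  by (simp add: threshold_def)

lemma strict_mono_threshold: "strict_mono threshold"
proof (rule strict_mono_Suc_iff[THEN iffD2], intro allI)
  fix k
  have "Max (b ` nodes k) \<le> Max (b ` nodes (Suc k))"
    using finite_nodes p0_in_nodes nodes_mono[of k "Suc k"] by (intro Max_mono) auto
  then show "threshold k < threshold (Suc k)" by (simp add: threshold_def)
qed

lemma tol_threshold_Suc: "tol (threshold (Suc k)) \<le> tol (threshold k) / 2"
  using strict_mono_threshold by (intro tol_less_imp_le_half) (simp add: strict_mono_Suc_iff)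

primrec pruned :: "nat set \<Rightarrow> nat \<Rightarrow> (nat option \<Rightarrow> real) set" where
  "pruned A 0 = {p0}"
| "pruned A (Suc k) = pruned A k \<union>
     (if {threshold k..<threshold (Suc k)} \<inter> A = {}
      then (\<lambda>p. a p (threshold k)) ` pruned A k else {})"

definition subtree :: "nat set \<Rightarrow> (nat option \<Rightarrow> real) set" where
  "subtree A = (\<Union>k. pruned A k)"

lemma pruned_subset_nodes: "pruned A k \<subseteq> nodes k"
  by (induction k) auto

lemma pruned_mono: "j \<le> k \<Longrightarrow> pruned A j \<subseteq> pruned A k"
  by (rule lift_Suc_mono_le[of "pruned A"]) auto

lemma subtree_subset: "subtree A \<subseteq> P"
  using pruned_subset_nodes nodes_subset by (fastforce simp: subtree_def)

lemma pruned_SucE: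
  assumes "q \<in> pruned A (Suc k)"
  obtains "q \<in> pruned A k"
    | p where "p \<in> pruned A k" "q = a p (threshold k)" "{threshold k..<threshold (Suc k)} \<inter> A = {}"
  using assms by (auto split: if_splits)

lemma pruned_in_P: "q \<in> pruned A k \<Longrightarrow> q \<in> P"
  using pruned_subset_nodes nodes_subset by blast

lemma pruned_oscillation:
  assumes "q \<in> pruned A k" "n \<in> A" "threshold 0 \<le> n"
  shows "\<bar>q (Some n) - q None\<bar> \<le> max 0 (tol n - tol (threshold k))"
  using assms(1)
proof (induction k arbitrary: q)
  case 0
  then show ?case
    using b_const[OF p0_in] b_le_threshold[of p0 0] assms(3) by simp
next
  case (Suc k)
  have tol_le: "tol (threshold (Suc k)) \<le> tol (threshold k)"
    using tol_threshold_Suc[of k] tol_pos[of "threshold k"] by linarith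
  from Suc.prems show ?case
  proof (cases rule: pruned_SucE)
    case 1
    then show ?thesis using Suc.IH tol_le by fastforce
  next
    case (2 p)
    have "p \<in> P" using \<open>p \<in> pruned A k\<close> by (rule pruned_in_P)
    show ?thesis
    proof (cases "threshold (Suc k) \<le> n")
      case True
      have "q \<in> nodes (Suc k)"
        using Suc.prems pruned_subset_nodes by blast
      then have "b q \<le> n"
        using b_le_threshold True by (meson le_trans)
      then have "q (Some n) = q None"
        using b_const a_in[OF \<open>p \<in> P\<close>] \<open>q = _\<close> by blast
      then show ?thesis by simp
    next
      case False
      have "n < threshold k"
      proof (rule ccontr)
        assume "\<not> n < threshold k"
        then have "n \<in> {threshold k..<threshold (Suc k)} \<inter> A"
          using False assms(2) by simp
        then show False using 2(3) by simp
      qed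
      then have "Some n \<in> first_coords (threshold k)"
        by (simp add: first_coords_def)
      then have "\<bar>q (Some n) - p (Some n)\<bar> < tol (threshold k) / 4"
        "\<bar>q None - p None\<bar> < tol (threshold k) / 4"
        using a_close[OF \<open>p \<in> P\<close>] \<open>q = _\<close> by (auto simp: first_coords_def)
      moreover have "\<bar>p (Some n) - p None\<bar> \<le> tol n - tol (threshold k)"
        using Suc.IH[OF 2(1)] tol_antimono[of n "threshold k"] \<open>n < threshold k\<close> by simp
      ultimately show ?thesis
        using tol_threshold_Suc[of k] by linarith
    qed
  qed
qed

lemma pruned_abs_bound:
  assumes x: "\<forall>k\<ge>t. x \<in> first_coords (threshold k)" and "q \<in> pruned A k"
  shows "\<bar>q x\<bar> \<le> Max ((\<lambda>p. \<bar>p x\<bar>) ` nodes t) + 1 - tol (threshold k)"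
  using assms(2)
proof (induction k arbitrary: q)
  case 0
  then have "\<bar>q x\<bar> \<le> Max ((\<lambda>p. \<bar>p x\<bar>) ` nodes t)"
    using p0_in_nodes finite_nodes by simp
  then show ?case using tol_le_one[of "threshold 0"] by linarith
next
  case (Suc k)
  from Suc.prems show ?case
  proof (cases rule: pruned_SucE)
    case 1
    then show ?thesis
      using Suc.IH[OF 1] tol_threshold_Suc[of k] tol_pos[of "threshold k"] by linarith
  next
    case (2 p)
    show ?thesis
    proof (cases "Suc k \<le> t")
      case True
      then have "q \<in> nodes t"
        using Suc.prems pruned_subset_nodes nodes_mono by blast
      then have "\<bar>q x\<bar> \<le> Max ((\<lambda>p. \<bar>p x\<bar>) ` nodes t)"
        using finite_nodes by simp
      then show ?thesis using tol_le_one[of "threshold (Suc k)"] by linarith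
    next
      case False
      then have "x \<in> first_coords (threshold k)"
        using x by simp
      then have "\<bar>q x - p x\<bar> < tol (threshold k) / 4"
        using a_close[OF pruned_in_P[OF 2(1)]] 2(2) by simp
      then show ?thesis
        using Suc.IH[OF 2(1)] tol_threshold_Suc[of k] by linarith
    qed
  qed
qed

lemma eventually_in_first_coords_threshold: "\<exists>t. \<forall>k\<ge>t. x \<in> first_coords (threshold k)"
proof (cases x)
  case None
  then show ?thesis by (simp add: first_coords_def)
next
  case (Some n)
  have "x \<in> first_coords (threshold k)" if "Suc n \<le> k" for k
    using that threshold_ge[of k] Some by (simp add: first_coords_def)
  then show ?thesis by blast
qed

lemma subtree_pointwise_bounded: "\<exists>r. \<forall>q\<in>subtree A. \<bar>q x\<bar> \<le> r"
proof -
  obtain t where t: "\<forall>k\<ge>t. x \<in> first_coords (threshold k)"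
    using eventually_in_first_coords_threshold by blast
  have "\<bar>q x\<bar> \<le> Max ((\<lambda>p. \<bar>p x\<bar>) ` nodes t) + 1" if q: "q \<in> subtree A" for q
  proof -
    obtain k where "q \<in> pruned A k" using q by (auto simp: subtree_def)
    then show ?thesis
      using pruned_abs_bound[OF t] tol_pos[of "threshold k"] by fastforce
  qed
  then show ?thesis by blast
qed

lemma subtree_approx:
  assumes gaps: "\<exists>\<^sub>\<infinity>k. {threshold k..<threshold (Suc k)} \<inter> A = {}"
    and "q \<in> subtree A" "finite S" "e > 0"
  shows "\<exists>y\<in>subtree A. y \<noteq> q \<and> (\<forall>x\<in>S. \<bar>y x - q x\<bar> < e)"
proof -
  obtain j where "q \<in> pruned A j" using assms(2) by (auto simp: subtree_def)
  obtain N where N: "S \<subseteq> first_coords N"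
    using finite_subset_first_coords[OF \<open>finite S\<close>] by blast
  obtain M where M: "tol M < e"
    using order_tendstoD(2)[OF LIMSEQ_tol \<open>e > 0\<close>] by (auto simp: eventually_sequentially)
  obtain k where k: "max j (max N M) \<le> k" "{threshold k..<threshold (Suc k)} \<inter> A = {}"
    using gaps unfolding INFM_nat_le by blast
  have "q \<in> pruned A k" using \<open>q \<in> pruned A j\<close> pruned_mono k(1) by auto
  then have "a q (threshold k) \<in> pruned A (Suc k)" using k(2) by simp
  then have y: "a q (threshold k) \<in> subtree A" unfolding subtree_def by blast
  have qP: "q \<in> P" using \<open>q \<in> pruned A j\<close> by (rule pruned_in_P)
  have "M \<le> threshold k" "N \<le> threshold k"
    using threshold_ge[of k] k(1) by simp_all
  then have "tol (threshold k) \<le> tol M" "S \<subseteq> first_coords (threshold k)"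
    using tol_antimono N first_coords_mono by blast+
  then have "\<forall>x\<in>S. \<bar>a q (threshold k) x - q x\<bar> < e"
    using a_close[OF qP] M tol_pos[of "threshold k"] by fastforce
  then show ?thesis using y a_neq[OF qP] by blast
qed

lemma compactin_closure_of_subtree:
  assumes F: "free_filter F" and "A \<in> F"
  shows "compactin (Cp (xi_topology F)) (Cp (xi_topology F) closure_of subtree A)"
proof -
  obtain r where r: "\<And>x. \<forall>q\<in>subtree A. \<bar>q x\<bar> \<le> r x"
    using subtree_pointwise_bounded by metis
  define K where "K = {g. (\<forall>n\<in>A \<inter> {threshold 0..}. \<bar>g (Some n) - g None\<bar> \<le> tol n) \<and>
                          (\<forall>x. \<bar>g x\<bar> \<le> r x)}"
  have K: "compactin (Cp (xi_topology F)) K"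
    unfolding K_def
    using free_filter_Int_atLeast[OF F \<open>A \<in> F\<close>] LIMSEQ_tol
    by (rule compactin_Cp_xi_topology[OF F])
  have "subtree A \<subseteq> K"
  proof
    fix q assume "q \<in> subtree A"
    then obtain k where "q \<in> pruned A k" by (auto simp: subtree_def)
    then have "\<bar>q (Some n) - q None\<bar> \<le> tol n" if "n \<in> A \<inter> {threshold 0..}" for n
      using pruned_oscillation[of q A k n] that tol_pos[of n] tol_pos[of "threshold k"] by auto
    then show "q \<in> K"
      using r \<open>q \<in> subtree A\<close> by (auto simp: K_def)
  qed
  then have "Cp (xi_topology F) closure_of subtree A \<subseteq> K"
    using closure_of_minimal compactin_imp_closedin[OF Hausdorff_space_Cp K] by blast
  then show ?thesis
    using closed_compactin[OF K] closedin_closure_of by blast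
qed

lemma crowded_in_subtree:
  assumes PX: "P \<subseteq> topspace (Cp X)"
    and gaps: "\<exists>\<^sub>\<infinity>k. {threshold k..<threshold (Suc k)} \<inter> A = {}"
  shows "crowded_in (Cp X) (subtree A)"
proof -
  have "p0 \<in> subtree A" by (auto simp: subtree_def intro: exI[of _ 0])
  moreover have sub: "subtree A \<subseteq> topspace (Cp X)"
    using subtree_subset PX by blast
  moreover have "subtree A \<subseteq> Cp X derived_set_of subtree A"
    unfolding in_derived_set_of_Cp[OF sub] subset_iff
    using sub subtree_approx[OF gaps] by blast
  ultimately show ?thesis
    unfolding crowded_in_def by blast
qed

end

lemma crowded_subset_with_compact_closure:
  assumes F: "free_filter F" and nm: "non_meager_family F"
    and cr: "crowded_in (Cp (xi_topology F)) P"
    and ev: "\<forall>p\<in>P. \<exists>N. \<forall>n\<ge>N. p (Some n) = p None"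
  shows "\<exists>Q\<subseteq>P. crowded_in (Cp (xi_topology F)) Q \<and>
           compactin (Cp (xi_topology F)) (Cp (xi_topology F) closure_of Q)"
proof -
  let ?X = "Cp (xi_topology F)"
  obtain p0 where "p0 \<in> P" and PX: "P \<subseteq> topspace ?X" and Pder: "P \<subseteq> ?X derived_set_of P"
    using cr unfolding crowded_in_def by blast
  have "\<exists>y\<in>P. y \<noteq> p \<and> (\<forall>x\<in>first_coords m. \<bar>y x - p x\<bar> < tol m / 4)" if "p \<in> P" for p m
  proof -
    have "p \<in> ?X derived_set_of P" using Pder that by blast
    moreover have "tol m / 4 > 0" using tol_pos[of m] by simp
    ultimately show ?thesis
      unfolding in_derived_set_of_Cp[OF PX] using finite_first_coords by blast
  qed
  then obtain a where a: "\<And>p m. p \<in> P \<Longrightarrow>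
      a p m \<in> P \<and> a p m \<noteq> p \<and> (\<forall>x\<in>first_coords m. \<bar>a p m x - p x\<bar> < tol m / 4)"
    by metis
  obtain b where b: "\<And>p n. p \<in> P \<Longrightarrow> b p \<le> n \<Longrightarrow> p (Some n) = p None"
    using ev by metis
  interpret crowded_tree P p0 a b
    using \<open>p0 \<in> P\<close> a b by unfold_locales blast+
  obtain A where "A \<in> F" and gaps: "\<exists>\<^sub>\<infinity>k. {threshold k..<threshold (Suc k)} \<inter> A = {}"
    using non_meager_family_avoids_intervals[OF nm strict_mono_threshold] by blast
  show ?thesis
    by (intro exI[of _ "subtree A"] conjI subtree_subset crowded_in_subtree[OF PX gaps]
        compactin_closure_of_subtree[OF F \<open>A \<in> F\<close>])
qed

theorem mainTheorem9:
  fixes F :: "nat set set"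
  assumes "free_filter F" and "non_meager_family F"
  shows "\<exists>D. countable D \<and> D \<subseteq> topspace (Cp (xi_topology F)) \<and>
             Cp (xi_topology F) closure_of D = topspace (Cp (xi_topology F)) \<and>
             (\<forall>P. P \<subseteq> D \<longrightarrow> crowded_in (Cp (xi_topology F)) P \<longrightarrow>
                (\<exists>Q. Q \<subseteq> P \<and> crowded_in (Cp (xi_topology F)) Q \<and>
                     compactin (Cp (xi_topology F)) (Cp (xi_topology F) closure_of Q)))"
proof (rule exI[of _ "range (case_prod rat_fun_of)"], intro conjI allI impI)
  show "countable (range (case_prod rat_fun_of))" by simp
  show "range (case_prod rat_fun_of) \<subseteq> topspace (Cp (xi_topology F))"
    using assms(1) by (rule rat_funs_subset_Cp_xi_topology)
  show "Cp (xi_topology F) closure_of range (case_prod rat_fun_of) = topspace (Cp (xi_topology F))"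
    using assms(1) by (rule closure_of_rat_funs)
  have ev: "\<exists>N. \<forall>n\<ge>N. p (Some n) = p None" if "p \<in> range (case_prod rat_fun_of)" for p
    using that rat_fun_of_eventually_const by force
  fix P assume PD: "P \<subseteq> range (case_prod rat_fun_of)"
    and cr: "crowded_in (Cp (xi_topology F)) P"
  have "\<forall>p\<in>P. \<exists>N. \<forall>n\<ge>N. p (Some n) = p None"
    using PD ev by blast
  then show "\<exists>Q. Q \<subseteq> P \<and> crowded_in (Cp (xi_topology F)) Q \<and>
      compactin (Cp (xi_topology F)) (Cp (xi_topology F) closure_of Q)"
    by (rule crowded_subset_with_compact_closure[OF assms cr])
qed

end
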